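(* A GFNN $\mathcal{N}=(V,E,V_{\mathrm{in}},V_{\mathrm{out}},\Omega,\Theta,\Lambda)$ is irreducible with respect to the nonlinearity $\tanh$ if and only if there do not exist nodes $u_1,u_2\in V\setminus V_{\mathrm{in}}$, $u_1\ne u_2$, and an $s\in\{-1,1\}$ such that $P:=\mathrm{par}(u_1)=\mathrm{par}(u_2)$, $\omega_{u_1v}=s\,\omega_{u_2v}$ for all $v\in P$, and $\theta_{u_1}=s\,\theta_{u_2}$.
   Context: A GFNN is a tuple $(V,E,V_{\mathrm{in}},V_{\mathrm{out}},\Omega,\Theta,\Lambda)$ where $(V,E)$ is a finite loopless directed acyclic graph, $V_{\mathrm{in}}$ is the set of nodes without incoming edges, $V_{\mathrm{out}}\subset V\setminus V_{\mathrm{in}}$, $\Omega=\{\omega_{\tilde vv}\in\mathbb{R}\setminus\{0\}:(v,\tilde v)\in E\}$, $\Theta=\{\theta_v\in\mathbb{R}:v\in V\setminus V_{\mathrm{in}}\}$, and $\Lambda$ consists of real output scalars. $\mathrm{par}(u)=\{v:(v,u)\in E\}$. An affine symmetry of a nonlinearity $\rho$ is $(\zeta,\{(\alpha_s,\beta_s,\gamma_s)\}_{s\in\mathcal{I}})$ with $\mathcal{I}$ nonempty finite, real entries, $\sum_s\alpha_s\rho(\beta_st+\gamma_s)=\zeta$ for all $t\in\mathbb{R}$, and no proper $\mathcal{I}'\subsetneq\mathcal{I}$ with $\{\rho(\beta_s\cdot+\gamma_s)\}_{s\in\mathcal{I}'}\cup\{\mathbf1\}$ linearly dependent. $\mathcal{N}$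 is $\rho$-reducible if there exist a nonempty $U\subset V$ whose nodes have a common parent set $P$, nonzero reals $\kappa_v$ ($v\in P$) and $\beta_u$ ($u\in U$) with $\omega_{uv}=\beta_u\kappa_v$ for all $u\in U,v\in P$, and $\zeta\in\mathbb{R}$ and nonzero reals $\alpha_u$ such that $(\zeta,\{(\alpha_u,\beta_u,\theta_u)\}_{u\in U})$ is an affine symmetry of $\rho$; otherwise $\mathcal{N}$ is irreducible. *)

theory Defs
  imports Complex_Main
begin

text \<open>A GFNN (V,E,Vin,Vout,Omega,Theta,Lambda). Nodes have type 'a.
  The weight of the edge (v,u) (from v to u) is w u v (= omega_{uv});
  the bias of a non-input node u is th u; output scalars are lam.\<close>

definition par :: "('a \<times> 'a) set \<Rightarrow> 'a \<Rightarrow> 'a set" where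
  "par E u = {v. (v, u) \<in> E}"

definition gfnn :: "'a set \<Rightarrow> ('a \<times> 'a) set \<Rightarrow> 'a set \<Rightarrow> 'a set
    \<Rightarrow> ('a \<Rightarrow> 'a \<Rightarrow> real) \<Rightarrow> ('a \<Rightarrow> real) \<Rightarrow> ('a \<Rightarrow> real) \<Rightarrow> bool" where
  "gfnn V E Vin Vout w th lam \<longleftrightarrow>
     finite V \<and> E \<subseteq> V \<times> V \<and> (\<forall>v. (v, v) \<notin> E) \<and> acyclic E \<and>
     Vin = {v \<in> V. \<not> (\<exists>u. (u, v) \<in> E)} \<and>
     Vout \<subseteq> V - Vin \<and>
     (\<forall>v u. (v, u) \<in> E \<longrightarrow> w u v \<noteq> 0)"

definition lin_dep_with_one :: "'i set \<Rightarrow> ('i \<Rightarrow> real \<Rightarrow> real) \<Rightarrow> bool" where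
  "lin_dep_with_one I f \<longleftrightarrow>
     (\<exists>c :: 'i \<Rightarrow> real. \<exists>c0 :: real.
        (c0 \<noteq> 0 \<or> (\<exists>s\<in>I. c s \<noteq> 0)) \<and>
        (\<forall>t. (\<Sum>s\<in>I. c s * f s t) + c0 = 0))"

definition affine_symmetry :: "(real \<Rightarrow> real) \<Rightarrow> real \<Rightarrow> 'i set
    \<Rightarrow> ('i \<Rightarrow> real) \<Rightarrow> ('i \<Rightarrow> real) \<Rightarrow> ('i \<Rightarrow> real) \<Rightarrow> bool" where
  "affine_symmetry \<rho> \<zeta> I \<alpha> \<beta> \<gamma> \<longleftrightarrow>
     finite I \<and> I \<noteq> {} \<and>
     (\<forall>t. (\<Sum>s\<in>I. \<alpha> s * \<rho> (\<beta> s * t + \<gamma> s)) = \<zeta>) \<and>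
     \<not> (\<exists>I'. I' \<subset> I \<and> lin_dep_with_one I' (\<lambda>s t. \<rho> (\<beta> s * t + \<gamma> s)))"

definition reducible :: "(real \<Rightarrow> real) \<Rightarrow> 'a set \<Rightarrow> ('a \<times> 'a) set \<Rightarrow> 'a set
    \<Rightarrow> ('a \<Rightarrow> 'a \<Rightarrow> real) \<Rightarrow> ('a \<Rightarrow> real) \<Rightarrow> bool" where
  "reducible \<rho> V E Vin w th \<longleftrightarrow>
     (\<exists>U P (\<kappa> :: 'a \<Rightarrow> real) (\<beta> :: 'a \<Rightarrow> real) (\<zeta> :: real) (\<alpha> :: 'a \<Rightarrow> real).
        U \<noteq> {} \<and> U \<subseteq> V - Vin \<and>
        (\<forall>u\<in>U. par E u = P) \<and>
        (\<forall>v\<in>P. \<kappa> v \<noteq> 0) \<and> (\<forall>u\<in>U. \<beta> u \<noteq> 0) \<and>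
        (\<forall>u\<in>U. \<forall>v\<in>P. w u v = \<beta> u * \<kappa> v) \<and>
        (\<forall>u\<in>U. \<alpha> u \<noteq> 0) \<and>
        affine_symmetry \<rho> \<zeta> U \<alpha> \<beta> th)"

definition irreducible :: "(real \<Rightarrow> real) \<Rightarrow> 'a set \<Rightarrow> ('a \<times> 'a) set \<Rightarrow> 'a set
    \<Rightarrow> ('a \<Rightarrow> 'a \<Rightarrow> real) \<Rightarrow> ('a \<Rightarrow> real) \<Rightarrow> bool" where
  "irreducible \<rho> V E Vin w th \<longleftrightarrow> \<not> reducible \<rho> V E Vin w th"

end

theory Submission
  imports "HOL-Complex_Analysis.Conformal_Mappings" Defs
begin

text \<open>
  Since tanh is odd, two neurons with the same parents whose weights and biases agree up to a
  common sign s cancel: tanh (s x + s y) - s tanh (x + y) = 0, and this two-term relation is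
  minimal because tanh of a nonconstant affine function is nonconstant.

  Conversely, after flipping signs every term of an affine symmetry has the form
  a tanh (b t + c) with b > 0, and without sign twins the pairs (b, c) are distinct. Such a sum
  cannot be constant unless all a vanish: continue the identity holomorphically to the strip
  |Im z| < pi / (2 B), where B is the largest b with a nonzero coefficient, and let z approach
  the point where B z + c = i pi / 2 for that term. This term has a pole there while all other
  terms stay holomorphic, so its coefficient must be zero.
\<close>

lemma tanh_of_real: "tanh (of_real x :: 'a :: {banach, real_normed_field}) = of_real (tanh x)"
  by (simp add: tanh_def sinh_field_def cosh_field_def flip: exp_of_real)

lemma cosh_complex_eq_0_iff: "cosh (z :: complex) = 0 \<longleftrightarrow> Re z = 0 \<and> cos (Im z) = 0"
proof -
  have "cosh z = 0 \<longleftrightarrow> (\<exists>n::int. \<i> * z = of_real (n * pi) + of_real pi / 2)"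
    by (simp add: cosh_conv_cos cos_eq_0)
  also have "\<dots> \<longleftrightarrow> Re z = 0 \<and> (\<exists>n::int. - Im z = n * pi + pi / 2)"
    by (auto simp: complex_eq_iff)
  also have "\<dots> \<longleftrightarrow> Re z = 0 \<and> cos (Im z) = 0"
    using cos_zero_iff_int2 [of "- Im z"] by simp
  finally show ?thesis .
qed

lemma cosh_complex_nonzero_if_abs_Im_less:
  assumes "\<bar>Im z\<bar> < pi / 2"
  shows "cosh (z :: complex) \<noteq> 0"
proof -
  have "0 < cos (Im z)"
    using assms by (intro cos_gt_zero_pi) auto
  then show ?thesis
    by (simp add: cosh_complex_eq_0_iff)
qed

lemma tanh_sum_extends_to_strip:
  fixes a b c :: "'i \<Rightarrow> real" and z :: complex
  assumes b: "\<And>u. u \<in> U \<Longrightarrow> \<bar>b u\<bar> \<le> B"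
    and eq: "\<And>t. (\<Sum>u\<in>U. a u * tanh (b u * t + c u)) = \<zeta>"
    and z: "\<bar>Im z\<bar> < pi / (2 * B)"
  shows "(\<Sum>u\<in>U. of_real (a u) * tanh (of_real (b u) * z + of_real (c u))) = of_real \<zeta>"
proof -
  define r where "r = pi / (2 * B)"
  have "0 < pi / (2 * B)"
    using z by linarith
  then have "B > 0"
    by (simp add: zero_less_divide_iff)
  define S where "S = {z. Im z < r} \<inter> {z. Im z > - r}"
  have "open S"
    unfolding S_def by (intro open_Int open_halfspace_Im_lt open_halfspace_Im_gt)
  have "connected S"
    unfolding S_def
    by (intro convex_connected convex_Int convex_halfspace_Im_lt convex_halfspace_Im_gt)
  define F where "F z = (\<Sum>u\<in>U. of_real (a u) * tanh (of_real (b u) * z + of_real (c u))) - of_real \<zeta>"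
    for z :: complex
  have cosh_nonzero: "cosh (of_real (b u) * z + of_real (c u)) \<noteq> 0" if "u \<in> U" "z \<in> S" for u z
  proof (rule cosh_complex_nonzero_if_abs_Im_less)
    have "\<bar>b u\<bar> * \<bar>Im z\<bar> \<le> B * \<bar>Im z\<bar>"
      using b that(1) by (intro mult_right_mono) auto
    also have "\<dots> < B * r"
      using that(2) \<open>B > 0\<close> by (auto simp: S_def)
    finally show "\<bar>Im (of_real (b u) * z + of_real (c u))\<bar> < pi / 2"
      using \<open>B > 0\<close> by (simp add: abs_mult r_def)
  qed
  have "F holomorphic_on S"
    unfolding F_def holomorphic_on_open [OF \<open>open S\<close>]
    by (auto intro!: derivative_eq_intros simp: cosh_nonzero)
  moreover have "F x = 0" if "x \<in> \<real>" for x
    using that eq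
    by (auto elim!: Reals_cases simp: F_def tanh_of_real simp flip: of_real_mult of_real_add of_real_sum)
  moreover have "0 islimpt (\<real> :: complex set)"
    unfolding islimpt_approachable
  proof (intro allI impI)
    fix e :: real
    assume "e > 0"
    then show "\<exists>x \<in> (\<real> :: complex set). x \<noteq> 0 \<and> dist x 0 < e"
      by (intro bexI [of _ "complex_of_real (e / 2)"]) (auto simp: dist_norm)
  qed
  moreover have "\<real> \<subseteq> S" "0 \<in> S" "z \<in> S"
    using z \<open>B > 0\<close> by (auto simp: S_def r_def elim!: Reals_cases)
  ultimately have "F z = 0"
    using analytic_continuation [OF _ \<open>open S\<close> \<open>connected S\<close>] by blast
  then show ?thesis
    by (simp add: F_def)
qed

lemma cosh_affine_nonzero_off_pole:
  fixes b c B c0 :: real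
  assumes "0 < B" "0 \<le> b" "b \<le> B" "(b, c) \<noteq> (B, c0)"
  shows "cosh (of_real b * Complex (- c0 / B) (pi / (2 * B)) + of_real c) \<noteq> 0"
proof
  assume "cosh (of_real b * Complex (- c0 / B) (pi / (2 * B)) + of_real c) = 0"
  then have re: "c - b * c0 / B = 0" and cos: "cos (b * (pi / (2 * B))) = 0"
    by (simp_all add: cosh_complex_eq_0_iff)
  have "b = B"
  proof (rule ccontr)
    assume "b \<noteq> B"
    then have "b * (pi / (2 * B)) < B * (pi / (2 * B))"
      using assms(1,3) by (intro mult_strict_right_mono) auto
    moreover have "0 \<le> b * (pi / (2 * B))"
      using assms(1,2) by simp
    ultimately have "0 < cos (b * (pi / (2 * B)))"
      using assms(1) by (intro cos_gt_zero_pi) auto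
    with cos show False
      by simp
  qed
  moreover from this re have "c = c0"
    using assms(1) by simp
  ultimately show False
    using assms(4) by simp
qed

lemma isCont_vanishing_below_imp_zero:
  fixes G :: "complex \<Rightarrow> 'a :: {t2_space, zero}"
  assumes "isCont G z" "0 < d" "\<And>s. 0 < s \<Longrightarrow> s < d \<Longrightarrow> G (z - \<i> * of_real s) = 0"
  shows "G z = 0"
proof -
  have "((\<lambda>s. z - \<i> * of_real s) \<longlongrightarrow> z) (at_right 0)"
    by (auto intro!: tendsto_eq_intros)
  then have "((\<lambda>s. G (z - \<i> * of_real s)) \<longlongrightarrow> G z) (at_right 0)"
    by (rule isCont_tendsto_compose [OF assms(1)])
  moreover have "eventually (\<lambda>s. G (z - \<i> * of_real s) = 0) (at_right 0)"
    unfolding eventually_at_right_field using assms(2,3) by blast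
  ultimately show ?thesis
    using tendsto_unique [OF trivial_limit_at_right_real] tendsto_eventually by metis
qed

lemma tanh_sum_const_imp_top_coeff_zero:
  fixes a b c :: "'i \<Rightarrow> real"
  assumes "finite U" "u0 \<in> U" "0 < b u0"
    and b: "\<And>u. u \<in> U \<Longrightarrow> 0 \<le> b u \<and> b u \<le> b u0"
    and inj: "inj_on (\<lambda>u. (b u, c u)) U"
    and eq: "\<And>t. (\<Sum>u\<in>U. a u * tanh (b u * t + c u)) = \<zeta>"
  shows "a u0 = 0"
proof -
  define B where "B = b u0"
  define c0 where "c0 = c u0"
  have "B > 0"
    using \<open>0 < b u0\<close> by (simp add: B_def)
  define w where "w z = of_real B * z + of_real c0" for z :: complex
  define H where "H z = (\<Sum>u\<in>U - {u0}. of_real (a u) * tanh (of_real (b u) * z + of_real (c u)))"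
    for z :: complex
  \<comment> \<open>The identity with the denominator cosh (w z) of its u0-term cleared: unlike tanh (w z),
    G is continuous at the pole z0 of tanh (w z) on the upper edge of the strip.\<close>
  define G where "G z = of_real (a u0) * sinh (w z) + (H z - of_real \<zeta>) * cosh (w z)" for z
  define z0 where "z0 = Complex (- c0 / B) (pi / (2 * B))"
  have G_strip: "G z = 0" if "\<bar>Im z\<bar> < pi / (2 * B)" for z
  proof -
    have "of_real (a u0) * tanh (w z) + H z = of_real \<zeta>"
      using tanh_sum_extends_to_strip [of U b B a c \<zeta> z] b eq that \<open>finite U\<close> \<open>u0 \<in> U\<close>
      by (simp add: sum.remove H_def w_def B_def c0_def)
    moreover have "cosh (w z) \<noteq> 0"
    proof (rule cosh_complex_nonzero_if_abs_Im_less)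
      have "B * \<bar>Im z\<bar> < B * (pi / (2 * B))"
        using that \<open>B > 0\<close> by (intro mult_strict_left_mono) auto
      then show "\<bar>Im (w z)\<bar> < pi / 2"
        using \<open>B > 0\<close> by (simp add: w_def abs_mult)
    qed
    ultimately show ?thesis
      by (simp add: G_def tanh_def field_simps)
  qed
  have pole_free: "cosh (of_real (b u) * z0 + of_real (c u)) \<noteq> 0" if "u \<in> U - {u0}" for u
    unfolding z0_def B_def c0_def
    using \<open>0 < b u0\<close> b [of u] inj_onD [OF inj, of u u0] that \<open>u0 \<in> U\<close>
    by (intro cosh_affine_nonzero_off_pole) auto
  have "G z0 = 0"
  proof (rule isCont_vanishing_below_imp_zero [where G = G and z = z0])
    show "isCont G z0"
      unfolding G_def H_def w_def by (intro continuous_intros) (auto simp: Lim_ident_at pole_free)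
    show "0 < pi / B"
      using \<open>B > 0\<close> by simp
    show "G (z0 - \<i> * of_real s) = 0" if "0 < s" "s < pi / B" for s
      using that by (intro G_strip) (simp add: z0_def abs_less_iff field_simps)
  qed
  have w_z0: "w z0 = \<i> * of_real (pi / 2)"
    using \<open>B > 0\<close> by (simp add: w_def z0_def complex_eq_iff)
  have "G z0 = of_real (a u0) * \<i>"
    unfolding G_def w_z0 by (simp add: sinh_conv_sin cosh_conv_cos flip: sin_of_real cos_of_real)
  with \<open>G z0 = 0\<close> show ?thesis
    by simp
qed

lemma tanh_sum_const_imp_coeffs_zero:
  fixes a b c :: "'i \<Rightarrow> real"
  assumes "finite U"
    and b: "\<And>u. u \<in> U \<Longrightarrow> 0 < b u"
    and inj: "inj_on (\<lambda>u. (b u, c u)) U"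
    and eq: "\<And>t. (\<Sum>u\<in>U. a u * tanh (b u * t + c u)) = \<zeta>"
    and "u \<in> U"
  shows "a u = 0"
proof (rule ccontr)
  assume "a u \<noteq> 0"
  define U' where "U' = {u \<in> U. a u \<noteq> 0}"
  have "finite U'" "U' \<subseteq> U"
    using \<open>finite U\<close> by (auto simp: U'_def)
  have "Max (b ` U') \<in> b ` U'"
    using \<open>finite U'\<close> \<open>a u \<noteq> 0\<close> \<open>u \<in> U\<close> by (intro Max_in) (auto simp: U'_def)
  then obtain u0 where "u0 \<in> U'" and "b u0 = Max (b ` U')"
    by auto
  then have u0_max: "b u \<le> b u0" if "u \<in> U'" for u
    using \<open>finite U'\<close> that by simp
  have "(\<Sum>u\<in>U'. a u * tanh (b u * t + c u)) = \<zeta>" for t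
    using eq [of t] by (subst sum.mono_neutral_left [OF \<open>finite U\<close> \<open>U' \<subseteq> U\<close>]) (auto simp: U'_def)
  then have "a u0 = 0"
    using \<open>finite U'\<close> \<open>u0 \<in> U'\<close> \<open>U' \<subseteq> U\<close> b inj_on_subset [OF inj \<open>U' \<subseteq> U\<close>]
    by (intro tanh_sum_const_imp_top_coeff_zero [of U' u0 b c a \<zeta>])
       (auto intro: u0_max less_imp_le)
  with \<open>u0 \<in> U'\<close> show False
    by (simp add: U'_def)
qed

lemma not_lin_dep_with_one_tanh_singleton:
  fixes \<beta> \<gamma> :: "'i \<Rightarrow> real"
  assumes "\<beta> u \<noteq> 0"
  shows "\<not> lin_dep_with_one {u} (\<lambda>s t. tanh (\<beta> s * t + \<gamma> s))"
proof
  assume "lin_dep_with_one {u} (\<lambda>s t. tanh (\<beta> s * t + \<gamma> s))"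
  then obtain c c0 where nontrivial: "c0 \<noteq> 0 \<or> c \<noteq> 0"
    and vanish: "\<And>t. c * tanh (\<beta> u * t + \<gamma> u) + c0 = 0"
    unfolding lin_dep_with_one_def by auto
  have "c0 = 0"
    using vanish [of "- \<gamma> u / \<beta> u"] assms by simp
  moreover have "c * tanh 1 = 0"
    using vanish [of "(1 - \<gamma> u) / \<beta> u"] assms \<open>c0 = 0\<close> by simp
  ultimately show False
    using nontrivial by simp
qed

lemma tanh_sign_pair_affine_symmetry:
  fixes \<alpha> \<beta> \<gamma> :: "'i \<Rightarrow> real"
  assumes "u1 \<noteq> u2" "s \<in> {-1, 1}" "\<beta> u2 \<noteq> 0"
    and "\<beta> u1 = s * \<beta> u2" "\<gamma> u1 = s * \<gamma> u2" "\<alpha> u2 = - s * \<alpha> u1"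
  shows "affine_symmetry tanh 0 {u1, u2} \<alpha> \<beta> \<gamma>"
  unfolding affine_symmetry_def
proof (intro conjI allI notI)
  have tanh_odd: "tanh (s * x) = s * tanh x" for x
    using assms(2) by auto
  show "(\<Sum>u\<in>{u1, u2}. \<alpha> u * tanh (\<beta> u * t + \<gamma> u)) = 0" for t
    using assms(1,4-6) tanh_odd [of "\<beta> u2 * t + \<gamma> u2"] by (simp add: algebra_simps)
next
  assume "\<exists>I \<subset> {u1, u2}. lin_dep_with_one I (\<lambda>u t. tanh (\<beta> u * t + \<gamma> u))"
  then obtain I where "I \<subset> {u1, u2}" and dep: "lin_dep_with_one I (\<lambda>u t. tanh (\<beta> u * t + \<gamma> u))"
    by blast
  then consider "I = {}" | u where "u \<in> {u1, u2}" "I = {u}"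
    by blast
  then show False
  proof cases
    case 1
    with dep show False
      by (simp add: lin_dep_with_one_def)
  next
    case 2
    then have "\<beta> u \<noteq> 0"
      using assms(2-4) by auto
    with 2 dep show False
      using not_lin_dep_with_one_tanh_singleton [of \<beta> u \<gamma>] by simp
  qed
qed auto

definition sign_twins :: "('a \<times> 'a) set \<Rightarrow> ('a \<Rightarrow> 'a \<Rightarrow> real) \<Rightarrow> ('a \<Rightarrow> real) \<Rightarrow> 'a \<Rightarrow> 'a \<Rightarrow> bool" where
  "sign_twins E w th u1 u2 \<longleftrightarrow>
     (\<exists>s \<in> {-1, 1::real}. par E u1 = par E u2 \<and>
        (\<forall>v \<in> par E u1. w u1 v = s * w u2 v) \<and> th u1 = s * th u2)"

lemma sign_twins_imp_reducible_tanh: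
  assumes "gfnn V E Vin Vout w th lam"
    and "u1 \<in> V - Vin" "u2 \<in> V - Vin" "u1 \<noteq> u2" "sign_twins E w th u1 u2"
  shows "reducible tanh V E Vin w th"
proof -
  obtain s where s: "s \<in> {-1, 1}" and par: "par E u1 = par E u2"
    and w: "\<forall>v \<in> par E u1. w u1 v = s * w u2 v" and th: "th u1 = s * th u2"
    using assms(5) unfolding sign_twins_def by blast
  define U where "U = {u1, u2}"
  define \<kappa> where "\<kappa> v = w u2 v" for v
  define \<beta> where "\<beta> u = (if u = u1 then s else 1)" for u
  define \<alpha> where "\<alpha> u = (if u = u1 then 1 else - s)" for u
  have "affine_symmetry tanh 0 U \<alpha> \<beta> th"
    unfolding U_def using assms(4) s th
    by (intro tanh_sign_pair_affine_symmetry) (auto simp: \<alpha>_def \<beta>_def)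
  moreover have "\<forall>v \<in> par E u1. \<kappa> v \<noteq> 0"
  proof -
    have "\<forall>v u. (v, u) \<in> E \<longrightarrow> w u v \<noteq> 0"
      using assms(1) unfolding gfnn_def by blast
    then show ?thesis
      unfolding par by (simp add: par_def \<kappa>_def)
  qed
  moreover have "\<forall>u \<in> U. \<forall>v \<in> par E u1. w u v = \<beta> u * \<kappa> v"
    using w assms(4) by (auto simp: U_def \<beta>_def \<kappa>_def)
  moreover have "\<forall>u \<in> U. \<beta> u \<noteq> 0" "\<forall>u \<in> U. \<alpha> u \<noteq> 0"
    using s by (auto simp: U_def \<alpha>_def \<beta>_def)
  moreover have "\<forall>u \<in> U. par E u = par E u1"
    using par by (auto simp: U_def)
  moreover have "U \<noteq> {}" "U \<subseteq> V - Vin"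
    using assms(2,3) by (auto simp: U_def)
  ultimately show ?thesis
    unfolding reducible_def by blast
qed

lemma sign_multiple_if_abs_sgn_eq:
  fixes \<beta> \<beta>' \<gamma> \<gamma>' :: real
  assumes "\<beta> \<noteq> 0" "\<beta>' \<noteq> 0" "\<bar>\<beta>\<bar> = \<bar>\<beta>'\<bar>" "sgn \<beta> * \<gamma> = sgn \<beta>' * \<gamma>'"
  shows "\<exists>s \<in> {-1, 1}. \<beta> = s * \<beta>' \<and> \<gamma> = s * \<gamma>'"
  using assms by (cases "\<beta> > 0"; cases "\<beta>' > 0") (auto simp: sgn_if)

lemma tanh_affine_sgn_abs:
  fixes \<alpha> \<beta> \<gamma> t :: real
  assumes "\<beta> \<noteq> 0"
  shows "\<alpha> * tanh (\<beta> * t + \<gamma>) = (sgn \<beta> * \<alpha>) * tanh (\<bar>\<beta>\<bar> * t + sgn \<beta> * \<gamma>)"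
proof (cases "\<beta> > 0")
  case False
  then have "\<bar>\<beta>\<bar> * t + sgn \<beta> * \<gamma> = - (\<beta> * t + \<gamma>)" using assms by simp
  then show ?thesis using False assms by (simp only: tanh_minus) simp
qed simp

lemma reducible_tanh_imp_sign_twins:
  assumes "reducible tanh V E Vin w th"
  shows "\<exists>u1 \<in> V - Vin. \<exists>u2 \<in> V - Vin. u1 \<noteq> u2 \<and> sign_twins E w th u1 u2"
proof (rule ccontr)
  assume no_twins: "\<not> ?thesis"
  obtain U P \<kappa> \<beta> \<zeta> \<alpha> where "U \<noteq> {}" "U \<subseteq> V - Vin" and par: "\<forall>u\<in>U. par E u = P"
    and \<beta>: "\<forall>u\<in>U. \<beta> u \<noteq> 0" and w: "\<forall>u\<in>U. \<forall>v\<in>P. w u v = \<beta> u * \<kappa> v"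
    and \<alpha>: "\<forall>u\<in>U. \<alpha> u \<noteq> 0" and sym: "affine_symmetry tanh \<zeta> U \<alpha> \<beta> th"
    using assms unfolding reducible_def by blast
  have "finite U" and eq: "\<And>t. (\<Sum>u\<in>U. \<alpha> u * tanh (\<beta> u * t + th u)) = \<zeta>"
    using sym unfolding affine_symmetry_def by auto
  define b where "b u = \<bar>\<beta> u\<bar>" for u
  define c where "c u = sgn (\<beta> u) * th u" for u
  have eq_normalized: "(\<Sum>u\<in>U. (sgn (\<beta> u) * \<alpha> u) * tanh (b u * t + c u)) = \<zeta>" for t
  proof -
    have "\<alpha> u * tanh (\<beta> u * t + th u) = (sgn (\<beta> u) * \<alpha> u) * tanh (b u * t + c u)" if "u \<in> U" for u
      unfolding b_def c_def by (rule tanh_affine_sgn_abs) (use \<beta> that in blast)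
    then have "(\<Sum>u\<in>U. \<alpha> u * tanh (\<beta> u * t + th u))
        = (\<Sum>u\<in>U. (sgn (\<beta> u) * \<alpha> u) * tanh (b u * t + c u))"
      by (rule sum.cong [OF refl])
    with eq [of t] show ?thesis
      by simp
  qed
  have b_pos: "0 < b u" if "u \<in> U" for u
    using \<beta> that by (simp add: b_def)
  have inj: "inj_on (\<lambda>u. (b u, c u)) U"
  proof (rule inj_onI)
    fix u u'
    assume "u \<in> U" "u' \<in> U" "(b u, c u) = (b u', c u')"
    then have "\<bar>\<beta> u\<bar> = \<bar>\<beta> u'\<bar>" "sgn (\<beta> u) * th u = sgn (\<beta> u') * th u'"
      by (simp_all add: b_def c_def)
    then obtain s where s: "s \<in> {-1, 1}" and "\<beta> u = s * \<beta> u'" "th u = s * th u'"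
      using sign_multiple_if_abs_sgn_eq \<beta> \<open>u \<in> U\<close> \<open>u' \<in> U\<close> by blast
    moreover have "par E u = par E u'"
      using par \<open>u \<in> U\<close> \<open>u' \<in> U\<close> by simp
    moreover have "\<forall>v \<in> par E u. w u v = s * w u' v"
      using par w \<open>u \<in> U\<close> \<open>u' \<in> U\<close> \<open>\<beta> u = s * \<beta> u'\<close> by simp
    ultimately have "sign_twins E w th u u'"
      unfolding sign_twins_def by blast
    then show "u = u'"
      using no_twins \<open>U \<subseteq> V - Vin\<close> \<open>u \<in> U\<close> \<open>u' \<in> U\<close> by blast
  qed
  obtain u where "u \<in> U"
    using \<open>U \<noteq> {}\<close> by blast
  have "sgn (\<beta> u) * \<alpha> u = 0"
    using tanh_sum_const_imp_coeffs_zero [OF \<open>finite U\<close> b_pos inj eq_normalized \<open>u \<in> U\<close>] .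
  then show False
    using \<alpha> \<beta> \<open>u \<in> U\<close> by (simp add: sgn_eq_0_iff)
qed

theorem lemma1:
  fixes V Vin Vout :: "'a set" and E :: "('a \<times> 'a) set"
    and w :: "'a \<Rightarrow> 'a \<Rightarrow> real" and th lam :: "'a \<Rightarrow> real"
  assumes "gfnn V E Vin Vout w th lam"
  shows "irreducible tanh V E Vin w th \<longleftrightarrow>
    \<not> (\<exists>u1 \<in> V - Vin. \<exists>u2 \<in> V - Vin. u1 \<noteq> u2 \<and>
          (\<exists>s \<in> {-1, 1::real}. par E u1 = par E u2 \<and>
             (\<forall>v \<in> par E u1. w u1 v = s * w u2 v) \<and> th u1 = s * th u2))"
  using reducible_tanh_imp_sign_twins [of V E Vin w th] sign_twins_imp_reducible_tanh [OF assms]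
  unfolding irreducible_def sign_twins_def by blast

end
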